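(* Let $\tilde k$ be an $\mathbb R^\times_{>0}$-graded field and let $f\colon\mathcal X\to\mathcal Y$ and $g\colon\mathcal Y\to\mathcal Z$ be morphisms in $\mathrm{bir}_{\tilde k}$ such that $g\circ f$ is proper. Assume that either $g$ is separated or $f$ is proper. Then both $f$ and $g$ are proper.
   Context: A $G$-graded ring ($G=\mathbb R^\times_{>0}$) is $A=\oplus_{g\in G}A_g$; a graded field is a nonzero graded ring whose nonzero homogeneous elements are invertible. A graded valuation ring of a graded field $K$ is a graded subring $\mathcal O$ such that for every nonzero homogeneous $f\in K$, $f\in\mathcal O$ or $f^{-1}\in\mathcal O$. For graded fields $\tilde k\subseteq K$, $\mathbf P_{K/\tilde k}$ is the set of graded valuation rings of $K$ containing $\tilde k$, topologized by the basis of sets $\{\mathcal O: f_1,\dots,f_n\in\mathcal O\}$ for homogeneous $f_i\in K$. An object of $\mathrm{bir}_{\tilde k}$ is $\mathcal X=(X\to\mathbf P_{K/\tilde k})$: a graded field extension $K/\tilde k$ and a local homeomorphism $X\to\mathbf P_{K/\tilde k}$ with $X$ non-empty, connected, quasi-compact and quasi-separated. A morphism $(Y\to\mathbf P_{L/\tilde k})\to(X\to\mathbf P_{K/\tilde k})$ is a graded $\tilde k$-embedding $K\hookrightarrow L$ and a continuous map $Y\to X$ compatible with the restriction map $\mathbf P_{L/\tilde k}\to\mathbf P_{K/\tilde k}$, $\mathcal O\mapsto\mathcal O\cap K$. Such a morphism is separated (resp. proper) if the induced map $Y\to X\times_{\mathbf P_{K/\tilde k}}\mathbf P_{L/\tilde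 k}$ is injective (resp. bijective). *)

theory Defs
  imports "HOL-Analysis.Analysis"
begin

text \<open>A grading of a commutative ring (the type 'a) is given by the family of
  homogeneous pieces gr g for g > 0 (values at g \<le> 0 are irrelevant).\<close>

definition homogeneous :: "(real \<Rightarrow> 'a::comm_ring_1 set) \<Rightarrow> 'a set" where
  "homogeneous gr = (\<Union>g\<in>{g. g > 0}. gr g)"

definition graded_decomp :: "(real \<Rightarrow> 'a::comm_ring_1 set) \<Rightarrow> 'a \<Rightarrow> (real \<Rightarrow> 'a) \<Rightarrow> bool" where
  "graded_decomp gr x c \<longleftrightarrow>
     (\<forall>g. g > 0 \<longrightarrow> c g \<in> gr g) \<and> (\<forall>g. g \<le> 0 \<longrightarrow> c g = 0) \<and>
     finite {g. c g \<noteq> 0} \<and> x = (\<Sum>g\<in>{g. c g \<noteq> 0}. c g)"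

definition graded_ring :: "(real \<Rightarrow> 'a::comm_ring_1 set) \<Rightarrow> bool" where
  "graded_ring gr \<longleftrightarrow>
     (\<forall>g>0. 0 \<in> gr g \<and> (\<forall>x\<in>gr g. \<forall>y\<in>gr g. x + y \<in> gr g) \<and> (\<forall>x\<in>gr g. - x \<in> gr g)) \<and>
     1 \<in> gr 1 \<and>
     (\<forall>g>0. \<forall>h>0. \<forall>x\<in>gr g. \<forall>y\<in>gr h. x * y \<in> gr (g * h)) \<and>
     (\<forall>x. \<exists>!c. graded_decomp gr x c)"

definition graded_field :: "(real \<Rightarrow> 'a::comm_ring_1 set) \<Rightarrow> bool" where
  "graded_field gr \<longleftrightarrow> graded_ring gr \<and> (0::'a) \<noteq> 1 \<and>
     (\<forall>f\<in>homogeneous gr. f \<noteq> 0 \<longrightarrow> (\<exists>u. f * u = 1))"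

definition graded_subring :: "(real \<Rightarrow> 'a::comm_ring_1 set) \<Rightarrow> 'a set \<Rightarrow> bool" where
  "graded_subring gr S \<longleftrightarrow>
     0 \<in> S \<and> 1 \<in> S \<and> (\<forall>x\<in>S. \<forall>y\<in>S. x + y \<in> S \<and> x * y \<in> S) \<and> (\<forall>x\<in>S. - x \<in> S) \<and>
     (\<forall>x\<in>S. \<forall>c. graded_decomp gr x c \<longrightarrow> (\<forall>g. c g \<in> S))"

definition graded_valuation_ring :: "(real \<Rightarrow> 'a::comm_ring_1 set) \<Rightarrow> 'a set \<Rightarrow> bool" where
  "graded_valuation_ring gr V \<longleftrightarrow> graded_subring gr V \<and>
     (\<forall>f\<in>homogeneous gr. f \<noteq> 0 \<longrightarrow> f \<in> V \<or> (\<exists>u\<in>V. f * u = 1))"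

definition graded_embedding ::
  "(real \<Rightarrow> 'a::comm_ring_1 set) \<Rightarrow> (real \<Rightarrow> 'b::comm_ring_1 set) \<Rightarrow> ('a \<Rightarrow> 'b) \<Rightarrow> bool" where
  "graded_embedding grA grB \<phi> \<longleftrightarrow>
     \<phi> 1 = 1 \<and> (\<forall>x y. \<phi> (x + y) = \<phi> x + \<phi> y) \<and> (\<forall>x y. \<phi> (x * y) = \<phi> x * \<phi> y) \<and>
     inj \<phi> \<and> (\<forall>g>0. \<phi> ` grA g \<subseteq> grB g)"

definition Pset :: "(real \<Rightarrow> 'a::comm_ring_1 set) \<Rightarrow> ('k \<Rightarrow> 'a) \<Rightarrow> 'a set set" where
  "Pset grK \<iota> = {V. graded_valuation_ring grK V \<and> range \<iota> \<subseteq> V}"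

definition Pspace :: "(real \<Rightarrow> 'a::comm_ring_1 set) \<Rightarrow> ('k \<Rightarrow> 'a) \<Rightarrow> 'a set topology" where
  "Pspace grK \<iota> = topology_generated_by
     {{V \<in> Pset grK \<iota>. F \<subseteq> V} | F. finite F \<and> F \<subseteq> homogeneous grK}"

definition local_homeomorphism :: "'p topology \<Rightarrow> 'q topology \<Rightarrow> ('p \<Rightarrow> 'q) \<Rightarrow> bool" where
  "local_homeomorphism X Y f \<longleftrightarrow> continuous_map X Y f \<and>
     (\<forall>x\<in>topspace X. \<exists>U. openin X U \<and> x \<in> U \<and> openin Y (f ` U) \<and>
        homeomorphic_map (subtopology X U) (subtopology Y (f ` U)) f)"

definition quasi_separated :: "'p topology \<Rightarrow> bool" where
  "quasi_separated X \<longleftrightarrow> (\<forall>U V. openin X U \<and> compactin X U \<and> openin X V \<and> compactin X V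
      \<longrightarrow> compactin X (U \<inter> V))"

definition bir_obj ::
  "(real \<Rightarrow> 'k::comm_ring_1 set) \<Rightarrow> (real \<Rightarrow> 'a::comm_ring_1 set) \<Rightarrow> ('k \<Rightarrow> 'a)
   \<Rightarrow> 'p topology \<Rightarrow> ('p \<Rightarrow> 'a set) \<Rightarrow> bool" where
  "bir_obj grk grK \<iota> X \<pi> \<longleftrightarrow>
     graded_field grk \<and> graded_field grK \<and> graded_embedding grk grK \<iota> \<and>
     topspace X \<noteq> {} \<and> connected_space X \<and> compact_space X \<and> quasi_separated X \<and>
     local_homeomorphism X (Pspace grK \<iota>) \<pi>"

text \<open>A morphism (Y \<rightarrow> P_{L/k}) \<rightarrow> (X \<rightarrow> P_{K/k}): a graded k-embedding \<phi> : K \<rightarrow> L and a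
  continuous map h : Y \<rightarrow> X compatible with the restriction O \<mapsto> O \<inter> K = \<phi>^{-1}(O).\<close>
definition bir_mor ::
  "(real \<Rightarrow> 'k::comm_ring_1 set)
   \<Rightarrow> (real \<Rightarrow> 'b::comm_ring_1 set) \<Rightarrow> ('k \<Rightarrow> 'b) \<Rightarrow> 'q topology \<Rightarrow> ('q \<Rightarrow> 'b set)
   \<Rightarrow> (real \<Rightarrow> 'a::comm_ring_1 set) \<Rightarrow> ('k \<Rightarrow> 'a) \<Rightarrow> 'p topology \<Rightarrow> ('p \<Rightarrow> 'a set)
   \<Rightarrow> ('a \<Rightarrow> 'b) \<Rightarrow> ('q \<Rightarrow> 'p) \<Rightarrow> bool" where
  "bir_mor grk grL \<iota>L Y \<pi>Y grK \<iota>K X \<pi>X \<phi> h \<longleftrightarrow>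
     bir_obj grk grL \<iota>L Y \<pi>Y \<and> bir_obj grk grK \<iota>K X \<pi>X \<and>
     graded_embedding grK grL \<phi> \<and> (\<forall>a. \<phi> (\<iota>K a) = \<iota>L a) \<and>
     continuous_map Y X h \<and>
     (\<forall>y\<in>topspace Y. \<pi>X (h y) = {a. \<phi> a \<in> \<pi>Y y})"

definition fibre_prod ::
  "(real \<Rightarrow> 'b::comm_ring_1 set) \<Rightarrow> ('k \<Rightarrow> 'b)
   \<Rightarrow> 'p topology \<Rightarrow> ('p \<Rightarrow> 'a::comm_ring_1 set) \<Rightarrow> ('a \<Rightarrow> 'b) \<Rightarrow> ('p \<times> 'b set) set" where
  "fibre_prod grL \<iota>L X \<pi>X \<phi> =
     {(x, V). x \<in> topspace X \<and> V \<in> topspace (Pspace grL \<iota>L) \<and> \<pi>X x = {a. \<phi> a \<in> V}}"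

definition mor_separated ::
  "(real \<Rightarrow> 'b::comm_ring_1 set) \<Rightarrow> ('k \<Rightarrow> 'b) \<Rightarrow> 'q topology \<Rightarrow> ('q \<Rightarrow> 'b set)
   \<Rightarrow> 'p topology \<Rightarrow> ('p \<Rightarrow> 'a::comm_ring_1 set) \<Rightarrow> ('a \<Rightarrow> 'b) \<Rightarrow> ('q \<Rightarrow> 'p) \<Rightarrow> bool" where
  "mor_separated grL \<iota>L Y \<pi>Y X \<pi>X \<phi> h \<longleftrightarrow> inj_on (\<lambda>y. (h y, \<pi>Y y)) (topspace Y)"

definition mor_proper ::
  "(real \<Rightarrow> 'b::comm_ring_1 set) \<Rightarrow> ('k \<Rightarrow> 'b) \<Rightarrow> 'q topology \<Rightarrow> ('q \<Rightarrow> 'b set)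
   \<Rightarrow> 'p topology \<Rightarrow> ('p \<Rightarrow> 'a::comm_ring_1 set) \<Rightarrow> ('a \<Rightarrow> 'b) \<Rightarrow> ('q \<Rightarrow> 'p) \<Rightarrow> bool" where
  "mor_proper grL \<iota>L Y \<pi>Y X \<pi>X \<phi> h \<longleftrightarrow>
     bij_betw (\<lambda>y. (h y, \<pi>Y y)) (topspace Y) (fibre_prod grL \<iota>L X \<pi>X \<phi>)"

end

theory Submission
  imports Defs
begin

(* Once restriction P_{L/k} -> P_{K/k}, O |-> O \<inter> K, is known to be surjective for every graded
   extension L/K, the claims are bookkeeping with the fibre maps x |-> (h x, \<pi> x) and the
   bijectivity of the fibre map of g o f: the fibre map of g is then always onto, so g is proper
   iff separated; separatedness of g makes the fibre map of f onto; and properness of f makes g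
   separated.

   Surjectivity of restriction is a graded form of Chevalley's extension theorem. For a graded
   valuation ring W of K, Zorn's lemma gives a maximal multiplicative set H of homogeneous elements
   of L containing the homogeneous part of W such that the maximal ideal of W generates a proper
   ideal in the ring spanned by H. That ring lies over W, and it is a graded valuation ring: if
   neither x nor x^-1 were in H, relations 1 = \<Sum> a i * x ^ i and 1 = \<Sum> b j * x ^ -j of minimal
   degrees with coefficients in that ideal could be shortened, as in the classical proof. *)

inductive_set additive_closure :: "'a::comm_monoid_add set \<Rightarrow> 'a set" for S where
  zero [intro]: "0 \<in> additive_closure S"
| add [intro]: "a \<in> S \<Longrightarrow> b \<in> additive_closure S \<Longrightarrow> a + b \<in> additive_closure S"

lemma additive_closure_base [intro]: "a \<in> S \<Longrightarrow> a \<in> additive_closure S"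
  using additive_closure.add[of a S 0] by auto

lemma additive_closure_add_closed:
  "x \<in> additive_closure S \<Longrightarrow> y \<in> additive_closure S \<Longrightarrow> x + y \<in> additive_closure S"
  by (induction x rule: additive_closure.induct) (auto simp: add.assoc)

lemma additive_closure_sum:
  "finite F \<Longrightarrow> (\<And>i. i \<in> F \<Longrightarrow> f i \<in> additive_closure S) \<Longrightarrow> sum f F \<in> additive_closure S"
  by (induction F rule: finite_induct) (auto intro: additive_closure_add_closed)

lemma additive_closure_least:
  assumes "0 \<in> T" "\<And>a b. a \<in> S \<Longrightarrow> b \<in> T \<Longrightarrow> a + b \<in> T"
  shows "additive_closure S \<subseteq> T"
proof
  fix x assume "x \<in> additive_closure S"
  then show "x \<in> T"
    by (induction x rule: additive_closure.induct) (auto intro: assms)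
qed

lemma additive_closure_mono: "S \<subseteq> T \<Longrightarrow> additive_closure S \<subseteq> additive_closure T"
  by (rule additive_closure_least) auto

lemma additive_closure_mult_left:
  fixes c :: "'a::semiring_0"
  assumes "\<And>a. a \<in> S \<Longrightarrow> c * a \<in> additive_closure T" "x \<in> additive_closure S"
  shows "c * x \<in> additive_closure T"
  using assms(2,1)
  by (induction x rule: additive_closure.induct) (auto simp: distrib_left intro: additive_closure_add_closed)

lemma additive_closure_image:
  assumes "Modules.additive f" "x \<in> additive_closure S"
  shows "f x \<in> additive_closure (f ` S)"
  using assms(2)
  by (induction x rule: additive_closure.induct)
    (auto simp: Modules.additive.zero[OF assms(1)] Modules.additive.add[OF assms(1)])

lemma power_mult_inverse_power:
  fixes x y :: "'a::comm_monoid_mult"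
  assumes "x * y = 1" "j \<le> n"
  shows "x ^ n * y ^ j = x ^ (n - j)"
proof -
  have "x ^ n = x ^ (n - j) * x ^ j" using assms(2) by (simp flip: power_add)
  then have "x ^ n * y ^ j = x ^ (n - j) * (x * y) ^ j" by (simp add: power_mult_distrib ac_simps)
  then show ?thesis using assms(1) by simp
qed

lemma top_term_expansion:
  fixes x y :: "'a::comm_ring_1"
  assumes xy: "x * y = 1" and mn: "m \<le> n" and m: "1 \<le> m"
    and s': "(1 - b 0) * s' = 1" and b: "1 = (\<Sum>j\<le>m. b j * y ^ j)"
  shows "a * x ^ n = (\<Sum>i\<in>{n - m..<n}. a * (s' * b (n - i)) * x ^ i)"
proof -
  have "{..m} = insert 0 {1..m}" by auto
  then have one_minus_b0: "1 - b 0 = (\<Sum>j\<in>{1..m}. b j * y ^ j)"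
    using b by (simp add: algebra_simps)
  have "a * x ^ n = a * x ^ n * ((1 - b 0) * s')" using s' by simp
  also have "\<dots> = (\<Sum>j\<in>{1..m}. a * (s' * b j) * (x ^ n * y ^ j))"
    unfolding one_minus_b0 by (simp add: sum_distrib_left sum_distrib_right ac_simps)
  also have "\<dots> = (\<Sum>j\<in>{1..m}. a * (s' * b (n - (n - j))) * x ^ (n - j))"
    using mn by (intro sum.cong refl) (auto simp: power_mult_inverse_power[OF xy])
  also have "\<dots> = (\<Sum>i\<in>{n - m..<n}. a * (s' * b (n - i)) * x ^ i)"
    by (rule sum.reindex_bij_witness[of _ "\<lambda>i. n - i" "\<lambda>j. n - j"]) (use mn m in auto)
  finally show ?thesis .
qed

lemma homogeneous_iff: "x \<in> homogeneous gr \<longleftrightarrow> (\<exists>g>0. x \<in> gr g)"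
  unfolding homogeneous_def by auto

locale graded =
  fixes gr :: "real \<Rightarrow> 'a::comm_ring_1 set"
  assumes graded_ring: "graded_ring gr"
begin

lemma zero_closed: "g > 0 \<Longrightarrow> 0 \<in> gr g"
  and add_closed: "g > 0 \<Longrightarrow> x \<in> gr g \<Longrightarrow> y \<in> gr g \<Longrightarrow> x + y \<in> gr g"
  and uminus_closed: "g > 0 \<Longrightarrow> x \<in> gr g \<Longrightarrow> - x \<in> gr g"
  and one_closed: "1 \<in> gr 1"
  and mult_closed: "g > 0 \<Longrightarrow> h > 0 \<Longrightarrow> x \<in> gr g \<Longrightarrow> y \<in> gr h \<Longrightarrow> x * y \<in> gr (g * h)"
  and decomp_exists: "\<exists>c. graded_decomp gr x c"
  and decomp_unique: "graded_decomp gr x c \<Longrightarrow> graded_decomp gr x c' \<Longrightarrow> c = c'"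
  using graded_ring unfolding graded_ring_def by blast+

lemma mult_closed_1: "x \<in> gr 1 \<Longrightarrow> y \<in> gr 1 \<Longrightarrow> x * y \<in> gr 1"
  using mult_closed[of 1 1 x y] by simp

lemma diff_closed_1: "x \<in> gr 1 \<Longrightarrow> y \<in> gr 1 \<Longrightarrow> x - y \<in> gr 1"
  using add_closed[of 1 x "- y"] uminus_closed[of 1 y] by simp

lemma mem_homogeneous: "g > 0 \<Longrightarrow> x \<in> gr g \<Longrightarrow> x \<in> homogeneous gr"
  unfolding homogeneous_iff by blast

lemma mem_homogeneous_1: "x \<in> gr 1 \<Longrightarrow> x \<in> homogeneous gr"
  by (rule mem_homogeneous[OF zero_less_one])

lemma homogeneous_one: "1 \<in> homogeneous gr"
  using mem_homogeneous_1[OF one_closed] .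

lemma homogeneous_uminus: "x \<in> homogeneous gr \<Longrightarrow> - x \<in> homogeneous gr"
  using uminus_closed unfolding homogeneous_iff by blast

lemma homogeneous_mult: "x \<in> homogeneous gr \<Longrightarrow> y \<in> homogeneous gr \<Longrightarrow> x * y \<in> homogeneous gr"
  unfolding homogeneous_iff by (metis mult_closed mult_pos_pos)

lemma homogeneous_power: "x \<in> homogeneous gr \<Longrightarrow> x ^ n \<in> homogeneous gr"
  by (induction n) (auto intro: homogeneous_mult homogeneous_one)

lemma decomp_single:
  assumes "g > 0" "z \<in> gr g"
  shows "graded_decomp gr z (\<lambda>h. if h = g then z else 0)"
proof -
  have "{h. (if h = g then z else 0) \<noteq> 0} = (if z = 0 then {} else {g})" by auto
  then show ?thesis using assms zero_closed unfolding graded_decomp_def by auto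
qed

lemma mem_two_degrees_eq_0:
  assumes "g > 0" "h > 0" "g \<noteq> h" "z \<in> gr g" "z \<in> gr h"
  shows "z = 0"
  using decomp_unique[OF decomp_single[OF assms(1,4)] decomp_single[OF assms(2,5)]] assms(3)
  by metis

lemma decomp_additive_closure:
  assumes S: "S \<subseteq> homogeneous gr" and z: "z \<in> additive_closure S"
  shows "\<exists>c. graded_decomp gr z c \<and> (\<forall>g>0. c g \<in> additive_closure (S \<inter> gr g))"
  using z
proof (induction z rule: additive_closure.induct)
  case zero
  show ?case
    by (rule exI[of _ "\<lambda>_. 0"]) (auto simp: graded_decomp_def zero_closed)
next
  case (add a z)
  then obtain c where c: "graded_decomp gr z c" "\<forall>g>0. c g \<in> additive_closure (S \<inter> gr g)"
    by blast
  obtain d where d: "d > 0" "a \<in> gr d" using add(1) S homogeneous_iff by blast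
  define c' where "c' = (\<lambda>g. c g + (if g = d then a else 0))"
  have fin: "finite {g. c g \<noteq> 0}" and z_eq: "z = sum c {g. c g \<noteq> 0}"
    using c(1) unfolding graded_decomp_def by auto
  let ?F = "insert d {g. c g \<noteq> 0}"
  have supp: "{g. c' g \<noteq> 0} \<subseteq> ?F" unfolding c'_def by auto
  have fin': "finite {g. c' g \<noteq> 0}" using fin supp finite_subset by blast
  have "sum c' {g. c' g \<noteq> 0} = sum c' ?F"
    by (rule sum.mono_neutral_left) (use fin supp in auto)
  also have "\<dots> = sum c ?F + a"
    unfolding c'_def sum.distrib using fin by simp
  also have "sum c ?F = z"
    unfolding z_eq by (rule sum.mono_neutral_right) (use fin in auto)
  finally have "graded_decomp gr (a + z) c'"
    using c(1) d fin'
    unfolding graded_decomp_def c'_def by (auto intro: add_closed simp: zero_closed add.commute)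
  moreover have "\<forall>g>0. c' g \<in> additive_closure (S \<inter> gr g)"
    using c(2) add(1) d unfolding c'_def by (auto simp: add.commute)
  ultimately show ?case by blast
qed

lemma additive_closure_homogeneous_component:
  assumes "S \<subseteq> homogeneous gr" "z \<in> additive_closure S" "g > 0" "z \<in> gr g"
  shows "z \<in> additive_closure (S \<inter> gr g)"
proof -
  obtain c where c: "graded_decomp gr z c" "\<forall>g>0. c g \<in> additive_closure (S \<inter> gr g)"
    using decomp_additive_closure[OF assms(1,2)] by blast
  have "c = (\<lambda>h. if h = g then z else 0)"
    using decomp_unique[OF c(1) decomp_single[OF assms(3,4)]] .
  then show ?thesis using c(2) assms(3) by metis
qed

text \<open>Projecting 1 = \<Sum> x * c h onto degree 1 leaves only the term with h = 1 / g.\<close>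
lemma inverse_closed:
  assumes g: "g > 0" "x \<in> gr g" and xu: "x * u = 1"
  shows "u \<in> gr (1 / g)"
proof -
  obtain c where c: "graded_decomp gr u c" using decomp_exists by blast
  let ?F = "{h. c h \<noteq> 0}"
  have fin: "finite ?F" and u: "u = sum c ?F"
    and c_mem: "\<And>h. h > 0 \<Longrightarrow> c h \<in> gr h" and c_pos: "\<And>h. h \<in> ?F \<Longrightarrow> h > 0"
    using c unfolding graded_decomp_def by (auto simp: not_le[symmetric])
  define S where "S = (\<lambda>h. x * c h) ` ?F"
  have S_deg: "x * c h \<in> gr (g * h)" "g * h > 0" if "h \<in> ?F" for h
    using mult_closed[OF g(1) c_pos[OF that] g(2) c_mem[OF c_pos[OF that]]] g(1) c_pos[OF that] by auto
  have "1 = (\<Sum>h\<in>?F. x * c h)" using xu u by (simp add: sum_distrib_left)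
  also have "\<dots> \<in> additive_closure S"
    unfolding S_def by (rule additive_closure_sum[OF fin]) auto
  finally have "1 \<in> additive_closure (S \<inter> gr 1)"
    using S_deg by (intro additive_closure_homogeneous_component[OF _ _ _ one_closed])
      (auto simp: S_def intro: mem_homogeneous)
  moreover have "additive_closure (S \<inter> gr 1) \<subseteq> (\<lambda>w. x * w) ` gr (1 / g)"
  proof (rule additive_closure_least)
    show "0 \<in> (\<lambda>w. x * w) ` gr (1 / g)" using zero_closed[of "1 / g"] g(1) by force
  next
    fix a b assume a: "a \<in> S \<inter> gr 1" and "b \<in> (\<lambda>w. x * w) ` gr (1 / g)"
    then obtain w where w: "b = x * w" "w \<in> gr (1 / g)" by blast
    obtain h where h: "h \<in> ?F" "a = x * c h" "a \<in> gr 1" using a unfolding S_def by blast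
    have "\<exists>v\<in>gr (1 / g). a = x * v"
    proof (cases "g * h = 1")
      case True
      then have "h = 1 / g" using g(1) by (auto simp: field_simps)
      then show ?thesis using h c_mem c_pos by auto
    next
      case False
      have "a = 0"
        using mem_two_degrees_eq_0[of 1 "g * h" a] False h S_deg[OF h(1)] by simp
      moreover have "0 \<in> gr (1 / g)" using zero_closed g(1) by simp
      ultimately show ?thesis by force
    qed
    then obtain v where "v \<in> gr (1 / g)" "a = x * v" by blast
    then have "a + b = x * (v + w)" "v + w \<in> gr (1 / g)"
      using w add_closed[of "1 / g" v w] g(1) by (simp_all add: distrib_left)
    then show "a + b \<in> (\<lambda>w. x * w) ` gr (1 / g)" by blast
  qed
  ultimately obtain w where w: "1 = x * w" "w \<in> gr (1 / g)" by auto
  have "u = u * (x * w)" using w by simp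
  also have "\<dots> = w" using xu by (simp add: mult.assoc[symmetric] mult.commute)
  finally show ?thesis using w by simp
qed

lemma homogeneous_inverse: "x \<in> homogeneous gr \<Longrightarrow> x * u = 1 \<Longrightarrow> u \<in> homogeneous gr"
proof -
  assume "x \<in> homogeneous gr" "x * u = 1"
  then obtain g where "g > 0" "x \<in> gr g" "x * u = 1" unfolding homogeneous_iff by blast
  then show ?thesis using inverse_closed mem_homogeneous[of "1 / g"] by simp
qed

end

lemma graded_field_graded: "graded_field gr \<Longrightarrow> graded gr"
  unfolding graded_field_def by (simp add: graded.intro)

lemma graded_field_inverse:
  "graded_field gr \<Longrightarrow> x \<in> homogeneous gr \<Longrightarrow> x \<noteq> 0 \<Longrightarrow> \<exists>u. x * u = 1"
  unfolding graded_field_def by blast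

locale graded_chevalley =
  fixes grK :: "real \<Rightarrow> 'b::comm_ring_1 set" and grL :: "real \<Rightarrow> 'a::comm_ring_1 set"
    and \<phi> :: "'b \<Rightarrow> 'a" and W :: "'b set"
  assumes field_K: "graded_field grK" and field_L: "graded_field grL"
    and embedding: "graded_embedding grK grL \<phi>" and valuation: "graded_valuation_ring grK W"
begin

sublocale K: graded grK using graded_field_graded[OF field_K] .
sublocale L: graded grL using graded_field_graded[OF field_L] .
sublocale phi: Modules.additive \<phi> by unfold_locales (use embedding in \<open>simp add: graded_embedding_def\<close>)

lemma phi_one: "\<phi> 1 = 1"
  and phi_mult: "\<phi> (x * y) = \<phi> x * \<phi> y"
  and phi_inj: "inj \<phi>"
  and phi_closed: "g > 0 \<Longrightarrow> x \<in> grK g \<Longrightarrow> \<phi> x \<in> grL g"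
  using embedding unfolding graded_embedding_def by blast+

lemma phi_eq_0_iff: "\<phi> x = 0 \<longleftrightarrow> x = 0"
  using phi_inj phi.zero by (metis injD)

lemma phi_homogeneous: "x \<in> homogeneous grK \<Longrightarrow> \<phi> x \<in> homogeneous grL"
  using phi_closed by (auto simp: homogeneous_iff)

lemma phi_decomp: "graded_decomp grK b c \<Longrightarrow> graded_decomp grL (\<phi> b) (\<lambda>g. \<phi> (c g))"
  unfolding graded_decomp_def by (auto simp: phi_eq_0_iff phi_closed phi.zero phi.sum)

lemma W_zero: "0 \<in> W" and W_one: "1 \<in> W"
  and W_add: "x \<in> W \<Longrightarrow> y \<in> W \<Longrightarrow> x + y \<in> W"
  and W_mult: "x \<in> W \<Longrightarrow> y \<in> W \<Longrightarrow> x * y \<in> W"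
  and W_uminus: "x \<in> W \<Longrightarrow> - x \<in> W"
  and W_component: "x \<in> W \<Longrightarrow> graded_decomp grK x c \<Longrightarrow> c g \<in> W"
  and W_valuation: "f \<in> homogeneous grK \<Longrightarrow> f \<noteq> 0 \<Longrightarrow> f \<in> W \<or> (\<exists>u\<in>W. f * u = 1)"
  using valuation unfolding graded_valuation_ring_def graded_subring_def by blast+

lemma W_sum: "(\<And>i. i \<in> F \<Longrightarrow> f i \<in> W) \<Longrightarrow> sum f F \<in> W"
  by (induction F rule: infinite_finite_induct) (auto intro: W_zero W_add)

lemma W_additive_closure: "W = additive_closure (W \<inter> homogeneous grK)"
proof
  show "W \<subseteq> additive_closure (W \<inter> homogeneous grK)"
  proof
    fix w assume w: "w \<in> W"
    obtain c where c: "graded_decomp grK w c" using K.decomp_exists by blast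
    then have "c g \<in> W \<inter> homogeneous grK" if "c g \<noteq> 0" for g
      using that W_component[OF w c] K.mem_homogeneous unfolding graded_decomp_def
      by (metis IntI not_le)
    then show "w \<in> additive_closure (W \<inter> homogeneous grK)"
      using c unfolding graded_decomp_def by (auto intro!: additive_closure_sum)
  qed
  show "additive_closure (W \<inter> homogeneous grK) \<subseteq> W"
    by (rule additive_closure_least) (auto intro: W_zero W_add)
qed

definition homogeneous_nonunits :: "'b set" where
  "homogeneous_nonunits = {m \<in> W \<inter> homogeneous grK. \<not> (\<exists>u\<in>W. m * u = 1)}"

lemma nonunit_mult:
  assumes m: "m \<in> homogeneous_nonunits" and w: "w \<in> W" and "w * m \<in> homogeneous grK"
  shows "w * m \<in> homogeneous_nonunits"
proof -
  have "\<not> (\<exists>u\<in>W. w * m * u = 1)"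
  proof
    assume "\<exists>u\<in>W. w * m * u = 1"
    then obtain u where "u \<in> W" "m * (w * u) = 1" by (auto simp: ac_simps)
    then show False using m w W_mult unfolding homogeneous_nonunits_def by blast
  qed
  then show ?thesis using assms W_mult unfolding homogeneous_nonunits_def by auto
qed

lemma inverse_nonunit:
  assumes "c \<in> homogeneous grK" "c \<notin> W" "u \<in> W" "c * u = 1"
  shows "u \<in> homogeneous_nonunits"
proof -
  have "\<not> (\<exists>u'\<in>W. u * u' = 1)"
  proof
    assume "\<exists>u'\<in>W. u * u' = 1"
    then obtain u' where u': "u' \<in> W" "u * u' = 1" by blast
    have "u' = (c * u) * u'" using assms(4) by simp
    also have "\<dots> = c" using u'(2) by (simp add: ac_simps)
    finally show False using u'(1) assms(2) by simp
  qed
  then show ?thesis using assms K.homogeneous_inverse unfolding homogeneous_nonunits_def by blast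
qed

text \<open>Of two nonzero summands one divides the other in W, their quotient being homogeneous
  of degree 1.\<close>
lemma nonunit_add_1:
  assumes a: "a \<in> homogeneous_nonunits" "a \<in> grK 1" and b: "b \<in> homogeneous_nonunits" "b \<in> grK 1"
  shows "a + b \<in> homogeneous_nonunits"
proof (cases "a = 0 \<or> b = 0")
  case True then show ?thesis using a b by auto
next
  case False
  have ab: "a + b \<in> homogeneous grK" using K.add_closed[of 1 a b] a b K.mem_homogeneous_1 by simp
  obtain b' where bb': "b * b' = 1"
    using graded_field_inverse[OF field_K K.mem_homogeneous_1[OF b(2)]] False by blast
  define q where "q = a * b'"
  have "b' \<in> grK 1" using K.inverse_closed[of 1 b b'] b(2) bb' by simp
  then have q: "q \<in> homogeneous grK" unfolding q_def using K.mult_closed_1 a(2) K.mem_homogeneous_1 by blast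
  have qb: "q * b = a" unfolding q_def using bb' by (simp add: ac_simps)
  then have "q \<noteq> 0" using False by auto
  then consider "q \<in> W" | u where "u \<in> W" "q * u = 1" using W_valuation[OF q] by blast
  then show ?thesis
  proof cases
    case 1
    have "a + b = (q + 1) * b" using qb by (simp add: algebra_simps)
    then show ?thesis using nonunit_mult[OF b(1) W_add[OF 1 W_one]] ab by simp
  next
    case (2 u)
    have "b = b * (q * u)" using 2(2) by simp
    also have "\<dots> = a * u" using qb by (metis mult.assoc mult.commute)
    finally have "a + b = (1 + u) * a" by (simp add: algebra_simps)
    then show ?thesis using nonunit_mult[OF a(1) W_add[OF W_one 2(1)]] ab by simp
  qed
qed

lemma one_notin_additive_closure_nonunits: "1 \<notin> additive_closure homogeneous_nonunits"
proof
  assume "1 \<in> additive_closure homogeneous_nonunits"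
  then have "1 \<in> additive_closure (homogeneous_nonunits \<inter> grK 1)"
    by (intro K.additive_closure_homogeneous_component K.one_closed)
      (auto simp: homogeneous_nonunits_def)
  moreover have "additive_closure (homogeneous_nonunits \<inter> grK 1) \<subseteq> homogeneous_nonunits"
  proof -
    have "0 \<in> homogeneous_nonunits"
      using W_zero K.zero_closed[of 1] K.mem_homogeneous_1 field_K
      unfolding homogeneous_nonunits_def graded_field_def by auto
    then have "additive_closure (homogeneous_nonunits \<inter> grK 1) \<subseteq> homogeneous_nonunits \<inter> grK 1"
      using K.zero_closed[of 1] K.add_closed[of 1] nonunit_add_1
      by (intro additive_closure_least) auto
    then show ?thesis by blast
  qed
  ultimately have "1 \<in> homogeneous_nonunits" by blast
  then show False using W_one unfolding homogeneous_nonunits_def by auto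
qed

definition ideal_generators :: "'a set \<Rightarrow> 'a set" where
  "ideal_generators H = {r * \<phi> m | r m. r \<in> H \<and> m \<in> homogeneous_nonunits}"

definition extended_ideal :: "'a set \<Rightarrow> 'a set" where
  "extended_ideal H = additive_closure (ideal_generators H)"

text \<open>A multiplicative set H of homogeneous elements stands for the graded subring
  additive_closure H of L, and extended_ideal H for the ideal generated there by the maximal
  ideal of W.\<close>
definition admissible :: "'a set \<Rightarrow> bool" where
  "admissible H \<longleftrightarrow> H \<subseteq> homogeneous grL \<and> \<phi> ` (W \<inter> homogeneous grK) \<subseteq> H \<and>
     (\<forall>a\<in>H. \<forall>b\<in>H. a * b \<in> H) \<and> 1 \<notin> extended_ideal H"

lemma ideal_generators_mono: "A \<subseteq> B \<Longrightarrow> ideal_generators A \<subseteq> ideal_generators B"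
  unfolding ideal_generators_def by blast

lemma ideal_generators_homogeneous:
  assumes "H \<subseteq> homogeneous grL" shows "ideal_generators H \<subseteq> homogeneous grL"
proof
  fix t assume "t \<in> ideal_generators H"
  then obtain r m where "t = r * \<phi> m" "r \<in> H" "m \<in> homogeneous grK"
    unfolding ideal_generators_def homogeneous_nonunits_def by blast
  then show "t \<in> homogeneous grL" using assms L.homogeneous_mult phi_homogeneous by blast
qed

lemma extended_ideal_zero: "0 \<in> extended_ideal H"
  unfolding extended_ideal_def by blast

lemma extended_ideal_add:
  "x \<in> extended_ideal H \<Longrightarrow> y \<in> extended_ideal H \<Longrightarrow> x + y \<in> extended_ideal H"
  unfolding extended_ideal_def by (rule additive_closure_add_closed)

lemma extended_ideal_sum:
  "finite F \<Longrightarrow> (\<And>i. i \<in> F \<Longrightarrow> f i \<in> extended_ideal H) \<Longrightarrow> sum f F \<in> extended_ideal H"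
  unfolding extended_ideal_def by (rule additive_closure_sum)

lemma extended_ideal_generator:
  "r \<in> H \<Longrightarrow> m \<in> homogeneous_nonunits \<Longrightarrow> r * \<phi> m \<in> extended_ideal H"
  unfolding extended_ideal_def ideal_generators_def by blast

lemma extended_ideal_Union_chain:
  assumes ne: "C \<noteq> {}" and chain: "subset.chain X C" and z: "z \<in> extended_ideal (\<Union>C)"
  shows "\<exists>A\<in>C. z \<in> extended_ideal A"
  using z unfolding extended_ideal_def
proof (induction z rule: additive_closure.induct)
  case zero then show ?case using ne extended_ideal_zero unfolding extended_ideal_def by blast
next
  case (add t z)
  obtain r m where t: "t = r * \<phi> m" "r \<in> \<Union>C" "m \<in> homogeneous_nonunits"
    using add.hyps(1) unfolding ideal_generators_def by blast
  obtain A where A: "A \<in> C" "r \<in> A" using t(2) by blast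
  obtain B where B: "B \<in> C" "z \<in> extended_ideal B" using add.IH unfolding extended_ideal_def by blast
  have t_mem: "t \<in> extended_ideal D" if "A \<subseteq> D" for D
    using extended_ideal_generator t A that by blast
  consider "A \<subseteq> B" | "B \<subseteq> A" using chain A(1) B(1) unfolding subset_chain_def by blast
  then have "\<exists>D\<in>C. t \<in> extended_ideal D \<and> z \<in> extended_ideal D"
  proof cases
    case 1 then show ?thesis using B t_mem by blast
  next
    case 2
    then have "z \<in> extended_ideal A"
      using B additive_closure_mono[OF ideal_generators_mono] unfolding extended_ideal_def by blast
    then show ?thesis using A t_mem by blast
  qed
  then show ?case using extended_ideal_add unfolding extended_ideal_def by blast
qed

context
  fixes H assumes adm: "admissible H"
begin

lemma admissible_homogeneous: "H \<subseteq> homogeneous grL"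
  and admissible_image_subset: "\<phi> ` (W \<inter> homogeneous grK) \<subseteq> H"
  and admissible_mult: "a \<in> H \<Longrightarrow> b \<in> H \<Longrightarrow> a * b \<in> H"
  and admissible_one_notin_ideal: "1 \<notin> extended_ideal H"
  using adm unfolding admissible_def by blast+

lemma admissible_uminus:
  assumes "h \<in> H" shows "- h \<in> H"
proof -
  have "\<phi> (- 1) \<in> H"
    using admissible_image_subset W_uminus[OF W_one] K.homogeneous_uminus[OF K.homogeneous_one] by blast
  then have "\<phi> (- 1) * h \<in> H" using admissible_mult assms by blast
  then show ?thesis by (simp add: phi.minus phi_one)
qed

lemma admissible_one: "1 \<in> H"
  using admissible_image_subset W_one K.homogeneous_one by (metis IntI image_subset_iff phi_one)

lemma ideal_generators_subset: "ideal_generators H \<subseteq> H"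
proof
  fix t assume "t \<in> ideal_generators H"
  then obtain r m where "t = r * \<phi> m" "r \<in> H" "m \<in> W \<inter> homogeneous grK"
    unfolding ideal_generators_def homogeneous_nonunits_def by blast
  then show "t \<in> H" using admissible_mult admissible_image_subset by blast
qed

lemma extended_ideal_subset: "extended_ideal H \<subseteq> additive_closure H"
  unfolding extended_ideal_def by (rule additive_closure_mono[OF ideal_generators_subset])

lemma additive_closure_mult:
  assumes x: "x \<in> additive_closure H" and y: "y \<in> additive_closure H"
  shows "x * y \<in> additive_closure H"
proof -
  have "a * y \<in> additive_closure H" if "a \<in> H" for a
    using that admissible_mult by (intro additive_closure_mult_left[OF _ y]) auto
  then have "y * x \<in> additive_closure H"
    by (intro additive_closure_mult_left[OF _ x]) (simp add: mult.commute)
  then show ?thesis by (simp add: mult.commute)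
qed

lemma additive_closure_uminus: "x \<in> additive_closure H \<Longrightarrow> - x \<in> additive_closure H"
  using additive_closure_mult_left[where c="- 1" and S=H and T=H] admissible_uminus by fastforce

lemma additive_closure_power: "x \<in> additive_closure H \<Longrightarrow> x ^ n \<in> additive_closure H"
  by (induction n) (simp_all add: additive_closure_base admissible_one additive_closure_mult)

lemma extended_ideal_mult_left:
  assumes "c \<in> additive_closure H" "z \<in> extended_ideal H"
  shows "c * z \<in> extended_ideal H"
proof -
  have "a * t \<in> extended_ideal H" if a: "a \<in> H" and t: "t \<in> ideal_generators H" for a t
  proof -
    obtain r m where "t = r * \<phi> m" "r \<in> H" "m \<in> homogeneous_nonunits"
      using t unfolding ideal_generators_def by blast
    then show ?thesis
      using extended_ideal_generator[where r="a * r" and m=m] admissible_mult[OF a] by (simp add: mult.assoc)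
  qed
  then have "a * z \<in> extended_ideal H" if "a \<in> H" for a
    using that assms(2) unfolding extended_ideal_def by (blast intro: additive_closure_mult_left)
  then have "z * c \<in> extended_ideal H"
    unfolding extended_ideal_def
    by (intro additive_closure_mult_left[where c=z, OF _ assms(1)]) (simp add: mult.commute extended_ideal_def)
  then show ?thesis by (simp add: mult.commute)
qed

end

lemma admissible_Union_chain:
  assumes ne: "C \<noteq> {}" and chain: "subset.chain (Collect admissible) C"
  shows "admissible (\<Union>C)"
proof -
  have adm: "\<And>A. A \<in> C \<Longrightarrow> admissible A"
    and total: "\<And>A B. A \<in> C \<Longrightarrow> B \<in> C \<Longrightarrow> A \<subseteq> B \<or> B \<subseteq> A"
    using chain unfolding subset_chain_def by auto
  have "a * b \<in> \<Union>C" if ab: "a \<in> \<Union>C" "b \<in> \<Union>C" for a b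
  proof -
    obtain A B where AB: "A \<in> C" "B \<in> C" "a \<in> A" "b \<in> B" using ab by blast
    then consider "a \<in> B" | "b \<in> A" using total by blast
    then show ?thesis using AB admissible_mult[OF adm] by cases blast+
  qed
  moreover have "1 \<notin> extended_ideal (\<Union>C)"
    using extended_ideal_Union_chain[OF ne chain] admissible_one_notin_ideal[OF adm] by blast
  moreover have "\<Union>C \<subseteq> homogeneous grL" using admissible_homogeneous[OF adm] by blast
  moreover have "\<phi> ` (W \<inter> homogeneous grK) \<subseteq> \<Union>C"
    using ne admissible_image_subset[OF adm] by blast
  ultimately show ?thesis unfolding admissible_def by blast
qed

lemma admissible_image: "admissible (\<phi> ` (W \<inter> homogeneous grK))"
proof -
  let ?H = "\<phi> ` (W \<inter> homogeneous grK)"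
  have gens: "ideal_generators ?H \<subseteq> \<phi> ` homogeneous_nonunits"
  proof
    fix t assume "t \<in> ideal_generators ?H"
    then obtain w m where t: "t = \<phi> (w * m)" and w: "w \<in> W" "w \<in> homogeneous grK"
      and m: "m \<in> homogeneous_nonunits"
      unfolding ideal_generators_def by (auto simp: phi_mult)
    have "m \<in> homogeneous grK" using m unfolding homogeneous_nonunits_def by blast
    then have "w * m \<in> homogeneous_nonunits"
      using nonunit_mult[OF m w(1)] K.homogeneous_mult[OF w(2)] by blast
    then show "t \<in> \<phi> ` homogeneous_nonunits" using t by blast
  qed
  have "extended_ideal ?H \<subseteq> \<phi> ` additive_closure homogeneous_nonunits"
    unfolding extended_ideal_def
  proof (rule additive_closure_least)
    show "0 \<in> \<phi> ` additive_closure homogeneous_nonunits"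
      using phi.zero by (metis additive_closure.zero image_eqI)
  next
    fix a b assume "a \<in> ideal_generators ?H" "b \<in> \<phi> ` additive_closure homogeneous_nonunits"
    then obtain m x where "a = \<phi> m" "m \<in> homogeneous_nonunits"
      "b = \<phi> x" "x \<in> additive_closure homogeneous_nonunits"
      using gens by blast
    then have "a + b = \<phi> (m + x)" "m + x \<in> additive_closure homogeneous_nonunits"
      by (auto simp: phi.add)
    then show "a + b \<in> \<phi> ` additive_closure homogeneous_nonunits" by blast
  qed
  moreover have "1 \<notin> \<phi> ` additive_closure homogeneous_nonunits"
    using one_notin_additive_closure_nonunits inj_image_mem_iff[OF phi_inj, of 1] phi_one by simp
  ultimately have "1 \<notin> extended_ideal ?H" by blast
  moreover have "a * b \<in> ?H" if "a \<in> ?H" "b \<in> ?H" for a b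
    using that W_mult K.homogeneous_mult by (auto simp flip: phi_mult)
  moreover have "?H \<subseteq> homogeneous grL" using phi_homogeneous by blast
  ultimately show ?thesis unfolding admissible_def by blast
qed

lemma exists_maximal_admissible:
  "\<exists>H. admissible H \<and> (\<forall>H'. admissible H' \<longrightarrow> H \<subseteq> H' \<longrightarrow> H' = H)"
proof -
  have "\<exists>H\<in>Collect admissible. \<forall>H'\<in>Collect admissible. H \<subseteq> H' \<longrightarrow> H' = H"
    using admissible_image admissible_Union_chain by (intro subset_Zorn_nonempty) auto
  then show ?thesis by blast
qed

text \<open>Witnesses that the extended ideal becomes the unit ideal once x is adjoined to H.\<close>
definition ideal_relation :: "'a set \<Rightarrow> 'a \<Rightarrow> nat \<Rightarrow> (nat \<Rightarrow> 'a) \<Rightarrow> bool" where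
  "ideal_relation H x n a \<longleftrightarrow> (\<forall>i. a i \<in> extended_ideal H) \<and> (\<forall>i. a i * x ^ i \<in> grL 1) \<and>
     (\<forall>i>n. a i = 0) \<and> 1 = (\<Sum>i\<le>n. a i * x ^ i)"

definition adjoin_powers :: "'a set \<Rightarrow> 'a \<Rightarrow> 'a set" where
  "adjoin_powers H z = {h * z ^ e | h e. h \<in> H}"

lemma adjoin_powers_homogeneous:
  "H \<subseteq> homogeneous grL \<Longrightarrow> z \<in> homogeneous grL \<Longrightarrow> adjoin_powers H z \<subseteq> homogeneous grL"
  unfolding adjoin_powers_def using L.homogeneous_power L.homogeneous_mult by blast

lemma one_in_extended_ideal_adjoin_powers:
  assumes adm: "admissible H" and max: "\<And>H'. admissible H' \<Longrightarrow> H \<subseteq> H' \<Longrightarrow> H' = H"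
    and z: "z \<in> homogeneous grL" "z \<notin> H"
  shows "1 \<in> extended_ideal (adjoin_powers H z)"
proof (rule ccontr)
  let ?H' = "adjoin_powers H z"
  assume "1 \<notin> extended_ideal ?H'"
  moreover have "H \<subseteq> ?H'" unfolding adjoin_powers_def by (force intro: exI[of _ 0])
  moreover have "?H' \<subseteq> homogeneous grL"
    using adjoin_powers_homogeneous[OF admissible_homogeneous[OF adm] z(1)] .
  moreover have "a * b \<in> ?H'" if ab: "a \<in> ?H'" "b \<in> ?H'" for a b
  proof -
    obtain h e h' e' where "a = h * z ^ e" "b = h' * z ^ e'" "h \<in> H" "h' \<in> H"
      using ab unfolding adjoin_powers_def by blast
    then have "a * b = (h * h') * z ^ (e + e')" "h * h' \<in> H"
      using admissible_mult[OF adm] by (auto simp: power_add ac_simps)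
    then show ?thesis unfolding adjoin_powers_def by blast
  qed
  ultimately have "admissible ?H'"
    using admissible_image_subset[OF adm] unfolding admissible_def by blast
  then have "?H' = H" using max \<open>H \<subseteq> ?H'\<close> by blast
  moreover have "z \<in> ?H'"
    unfolding adjoin_powers_def using admissible_one[OF adm] by (force intro: exI[of _ 1])
  ultimately show False using z(2) by blast
qed

lemma degree_1_ideal_expansion:
  assumes "w \<in> additive_closure (ideal_generators (adjoin_powers H z) \<inter> grL 1)"
  shows "\<exists>n a. (\<forall>i. a i \<in> extended_ideal H) \<and> (\<forall>i. a i * z ^ i \<in> grL 1) \<and>
    (\<forall>i>n. a i = 0) \<and> w = (\<Sum>i\<le>n. a i * z ^ i)"
  using assms
proof (induction w rule: additive_closure.induct)
  case zero
  show ?case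
    by (rule exI[of _ 0], rule exI[of _ "\<lambda>_. 0"]) (simp add: L.zero_closed extended_ideal_zero)
next
  case (add t w)
  obtain n a where a: "\<forall>i. a i \<in> extended_ideal H" "\<forall>i. a i * z ^ i \<in> grL 1" "\<forall>i>n. a i = 0"
    "w = (\<Sum>i\<le>n. a i * z ^ i)"
    using add.IH by blast
  obtain h e m where t: "t = h * \<phi> m * z ^ e" "h \<in> H" "m \<in> homogeneous_nonunits" "t \<in> grL 1"
    using add.hyps(1) unfolding ideal_generators_def adjoin_powers_def by (auto simp: ac_simps)
  define a' where "a' = (\<lambda>i. a i + (if i = e then h * \<phi> m else 0))"
  have "\<forall>i. a' i \<in> extended_ideal H"
    unfolding a'_def using a(1) extended_ideal_generator[OF t(2,3)]
    by (auto intro: extended_ideal_add extended_ideal_zero)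
  moreover have "\<forall>i. a' i * z ^ i \<in> grL 1"
    unfolding a'_def using a(2) t(1,4) by (auto simp: distrib_right intro: L.add_closed)
  moreover have "\<forall>i>max n e. a' i = 0" unfolding a'_def using a(3) by auto
  moreover have "t + w = (\<Sum>i\<le>max n e. a' i * z ^ i)"
  proof -
    have "(\<Sum>i\<le>max n e. a i * z ^ i) = w"
      unfolding a(4) by (rule sum.mono_neutral_right) (use a(3) in auto)
    moreover have "(\<Sum>i\<le>max n e. (if i = e then h * \<phi> m else 0) * z ^ i) = t"
      unfolding t(1) by (simp add: if_distrib[where f="\<lambda>c. c * _"] cong: if_cong)
    ultimately show ?thesis unfolding a'_def by (simp add: distrib_right sum.distrib)
  qed
  ultimately show ?case by blast
qed

context
  fixes H assumes adm: "admissible H" and max: "\<And>H'. admissible H' \<Longrightarrow> H \<subseteq> H' \<Longrightarrow> H' = H"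
begin

lemma ideal_relation_exists:
  assumes z: "z \<in> homogeneous grL" "z \<notin> H"
  shows "\<exists>n a. ideal_relation H z n a"
proof -
  have "1 \<in> additive_closure (ideal_generators (adjoin_powers H z) \<inter> grL 1)"
    using one_in_extended_ideal_adjoin_powers[OF adm max z]
      ideal_generators_homogeneous[OF adjoin_powers_homogeneous[OF admissible_homogeneous[OF adm] z(1)]]
    unfolding extended_ideal_def
    by (intro L.additive_closure_homogeneous_component L.one_closed) auto
  from degree_1_ideal_expansion[OF this] show ?thesis unfolding ideal_relation_def by blast
qed

text \<open>Maximality makes the ring spanned by H local. If s' = (1 - u)^-1 were not in H, a relation
  1 = \<Sum> c i * s' ^ i multiplied by (1 - u) ^ N would put (1 - u) ^ N into the ideal, while
  1 - (1 - u) ^ N is a multiple of u.\<close>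
lemma inverse_one_minus_mem:
  assumes u: "u \<in> extended_ideal H" "u \<in> grL 1"
  shows "\<exists>s'\<in>H. (1 - u) * s' = 1 \<and> s' \<in> grL 1"
proof -
  define s where "s = 1 - u"
  have s_deg: "s \<in> grL 1" unfolding s_def using L.diff_closed_1[OF L.one_closed u(2)] .
  have "s \<noteq> 0" using u(1) admissible_one_notin_ideal[OF adm] unfolding s_def by auto
  then obtain s' where ss': "s * s' = 1"
    using graded_field_inverse[OF field_L L.mem_homogeneous_1[OF s_deg]] by blast
  have s'_deg: "s' \<in> grL 1" using L.inverse_closed[OF _ s_deg ss'] by simp
  have s_closure: "s \<in> additive_closure H"
    unfolding s_def using additive_closure_add_closed[of 1 H "- u"] admissible_one[OF adm]
      additive_closure_uminus[OF adm] extended_ideal_subset[OF adm] u(1) by auto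
  have "s' \<in> H"
  proof (rule ccontr)
    assume "s' \<notin> H"
    then obtain N c where "ideal_relation H s' N c"
      using ideal_relation_exists L.mem_homogeneous_1[OF s'_deg] by blast
    then have c: "\<And>i. c i \<in> extended_ideal H" "1 = (\<Sum>i\<le>N. c i * s' ^ i)"
      unfolding ideal_relation_def by auto
    have "s ^ N = (\<Sum>i\<le>N. c i * s' ^ i) * s ^ N" using c(2) by simp
    also have "\<dots> = (\<Sum>i\<le>N. s ^ (N - i) * c i)"
      unfolding sum_distrib_right
    proof (intro sum.cong refl)
      fix i assume "i \<in> {..N}"
      then have "s ^ N * s' ^ i = s ^ (N - i)" using power_mult_inverse_power[OF ss'] by simp
      then show "c i * s' ^ i * s ^ N = s ^ (N - i) * c i" by (simp add: ac_simps)
    qed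
    also have "\<dots> \<in> extended_ideal H"
      by (intro extended_ideal_sum finite_atMost extended_ideal_mult_left[OF adm]
          additive_closure_power[OF adm] s_closure c(1))
    finally have "s ^ N \<in> extended_ideal H" .
    moreover have "1 - s ^ N = (\<Sum>i<N. s ^ i) * u"
      using one_diff_power_eq[of s N] unfolding s_def by (simp add: mult.commute)
    moreover have "\<dots> \<in> extended_ideal H"
      by (intro extended_ideal_mult_left[OF adm _ u(1)] additive_closure_sum finite_lessThan
          additive_closure_power[OF adm s_closure])
    ultimately have "s ^ N + (1 - s ^ N) \<in> extended_ideal H"
      using extended_ideal_add by metis
    then show False using admissible_one_notin_ideal[OF adm] by simp
  qed
  then show ?thesis using ss' s'_deg unfolding s_def by blast
qed

text \<open>Chevalley's degree reduction: if y = x^-1 has a relation of degree m \<le> n, the top term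
  a n * x ^ n can be rewritten in terms of x ^ (n - m), ..., x ^ (n - 1), using the inverse of
  1 - b 0 in H.\<close>
lemma ideal_relation_shorten:
  assumes Rx: "ideal_relation H x n a" and Ry: "ideal_relation H y m b"
    and xy: "x * y = 1" and mn: "m \<le> n"
  shows "\<exists>n'<n. \<exists>a'. ideal_relation H x n' a'"
proof -
  have aJ: "\<And>i. a i \<in> extended_ideal H" and a_deg: "\<And>i. a i * x ^ i \<in> grL 1"
    and a1: "1 = (\<Sum>i\<le>n. a i * x ^ i)"
    using Rx unfolding ideal_relation_def by auto
  have bJ: "\<And>i. b i \<in> extended_ideal H" and b_deg: "\<And>i. b i * y ^ i \<in> grL 1"
    and b1: "1 = (\<Sum>j\<le>m. b j * y ^ j)"
    using Ry unfolding ideal_relation_def by auto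
  have "m \<noteq> 0"
  proof
    assume "m = 0"
    then have "b 0 = 1" using b1 by simp
    then show False using bJ[of 0] admissible_one_notin_ideal[OF adm] by simp
  qed
  then have m: "1 \<le> m" and n: "1 \<le> n" using mn by auto
  obtain s' where s': "s' \<in> H" "(1 - b 0) * s' = 1" "s' \<in> grL 1"
    using inverse_one_minus_mem[OF bJ[of 0]] b_deg[of 0] by auto
  define c where "c i = a n * (s' * b (n - i))" for i
  have top: "a n * x ^ n = (\<Sum>i\<in>{n - m..<n}. c i * x ^ i)"
    unfolding c_def using top_term_expansion[OF xy mn m s'(2) b1] .
  have cJ: "c i \<in> extended_ideal H" for i
    unfolding c_def
    using extended_ideal_subset[OF adm] aJ[of n] s'(1) bJ
    by (blast intro: extended_ideal_mult_left[OF adm])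
  have c_deg: "c i * x ^ i \<in> grL 1" if "n - m \<le> i" "i < n" for i
  proof -
    have "x ^ i = x ^ n * y ^ (n - i)" using power_mult_inverse_power[OF xy, of "n - i" n] that by simp
    then have "c i * x ^ i = s' * ((a n * x ^ n) * (b (n - i) * y ^ (n - i)))"
      unfolding c_def by (simp add: ac_simps)
    then show ?thesis using L.mult_closed_1[OF s'(3) L.mult_closed_1[OF a_deg b_deg]] by simp
  qed
  define a' where "a' i = (if i < n then a i + (if n - m \<le> i then c i else 0) else 0)" for i
  have "ideal_relation H x (n - 1) a'"
    unfolding ideal_relation_def
  proof (intro conjI allI impI)
    fix i
    show "a' i \<in> extended_ideal H"
      unfolding a'_def using aJ cJ extended_ideal_zero extended_ideal_add by simp
    show "a' i * x ^ i \<in> grL 1"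
      unfolding a'_def using a_deg c_deg L.zero_closed[of 1] L.add_closed[of 1]
      by (simp add: distrib_right)
  next
    fix i assume "i > n - 1"
    then show "a' i = 0" unfolding a'_def by simp
  next
    have "{..n - 1} = {..<n}" using n by auto
    then have "(\<Sum>i\<le>n - 1. a' i * x ^ i)
        = (\<Sum>i<n. a i * x ^ i) + (\<Sum>i\<in>{..<n} \<inter> {i. n - m \<le> i}. c i * x ^ i)"
      unfolding a'_def by (simp add: distrib_right sum.distrib if_distrib[where f="\<lambda>t. t * _"]
          sum.inter_restrict cong: if_cong)
    also have "{..<n} \<inter> {i. n - m \<le> i} = {n - m..<n}" by auto
    also have "(\<Sum>i<n. a i * x ^ i) + (\<Sum>i\<in>{n - m..<n}. c i * x ^ i) = 1"
      unfolding a1 top[symmetric] by (simp add: lessThan_Suc_atMost[symmetric])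
    finally show "1 = (\<Sum>i\<le>n - 1. a' i * x ^ i)" by simp
  qed
  then show ?thesis using n by (intro exI[of _ "n - 1"]) auto
qed

lemma maximal_admissible_valuation:
  assumes x: "x \<in> homogeneous grL" "x \<noteq> 0"
  shows "x \<in> H \<or> (\<exists>y\<in>H. x * y = 1)"
proof (rule ccontr)
  assume nx: "\<not> (x \<in> H \<or> (\<exists>y\<in>H. x * y = 1))"
  obtain y where xy: "x * y = 1" using graded_field_inverse[OF field_L x] by blast
  then have y: "y \<in> homogeneous grL" "y \<notin> H" using L.homogeneous_inverse[OF x(1)] nx by auto
  have yx: "y * x = 1" using xy by (simp add: mult.commute)
  have "\<exists>n a. ideal_relation H x n a" using ideal_relation_exists[OF x(1)] nx by blast
  then obtain n a where Ra: "ideal_relation H x n a"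
    and n_min: "\<forall>n'<n. \<not> (\<exists>a'. ideal_relation H x n' a')"
    using exists_least_iff[of "\<lambda>n. \<exists>a. ideal_relation H x n a"] by blast
  obtain m b where Rb: "ideal_relation H y m b"
    and m_min: "\<forall>m'<m. \<not> (\<exists>b'. ideal_relation H y m' b')"
    using ideal_relation_exists[OF y] exists_least_iff[of "\<lambda>m. \<exists>b. ideal_relation H y m b"] by blast
  show False
  proof (cases "m \<le> n")
    case True
    then show False using ideal_relation_shorten[OF Ra Rb xy] n_min by blast
  next
    case False
    then show False using ideal_relation_shorten[OF Rb Ra yx] m_min by auto
  qed
qed

end

context
  fixes H assumes adm: "admissible H"
begin

lemma graded_subring_additive_closure: "graded_subring grL (additive_closure H)"
  unfolding graded_subring_def
proof (intro conjI ballI allI impI)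
  show "0 \<in> additive_closure H" "1 \<in> additive_closure H"
    using admissible_one[OF adm] by auto
  fix x y assume "x \<in> additive_closure H" "y \<in> additive_closure H"
  then show "x + y \<in> additive_closure H" "x * y \<in> additive_closure H"
    using additive_closure_add_closed additive_closure_mult[OF adm] by auto
next
  fix x assume "x \<in> additive_closure H"
  then show "- x \<in> additive_closure H" by (rule additive_closure_uminus[OF adm])
next
  fix x c g assume x: "x \<in> additive_closure H" and c: "graded_decomp grL x c"
  obtain c' where c': "graded_decomp grL x c'" "\<forall>g>0. c' g \<in> additive_closure (H \<inter> grL g)"
    using L.decomp_additive_closure[OF admissible_homogeneous[OF adm] x] by blast
  have "c = c'" using L.decomp_unique[OF c c'(1)] .
  show "c g \<in> additive_closure H"
  proof (cases "g > 0")
    case True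
    then show ?thesis using c'(2) \<open>c = c'\<close> additive_closure_mono[of "H \<inter> grL g" H] by blast
  next
    case False
    then have "c g = 0" using c unfolding graded_decomp_def by auto
    then show ?thesis by auto
  qed
qed

lemma additive_closure_contraction: "{b. \<phi> b \<in> additive_closure H} = W"
proof (intro equalityI subsetI)
  fix b assume "b \<in> {b. \<phi> b \<in> additive_closure H}"
  then have b: "\<phi> b \<in> additive_closure H" by simp
  show "b \<in> W"
  proof (rule ccontr)
    assume "b \<notin> W"
    obtain c where c: "graded_decomp grK b c" using K.decomp_exists by blast
    then obtain g where g: "c g \<notin> W"
      using \<open>b \<notin> W\<close> W_sum unfolding graded_decomp_def by metis
    then have "c g \<noteq> 0" using W_zero by auto
    then have "g > 0" "c g \<in> grK g" using c unfolding graded_decomp_def by (auto simp: not_le[symmetric])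
    then have cg: "c g \<in> homogeneous grK" by (rule K.mem_homogeneous)
    then obtain u where u: "u \<in> W" "c g * u = 1" using W_valuation \<open>c g \<noteq> 0\<close> g by blast
    have "\<phi> (c g) \<in> additive_closure H"
      using graded_subring_additive_closure b phi_decomp[OF c] unfolding graded_subring_def by blast
    moreover have "1 * \<phi> u \<in> extended_ideal H"
      using extended_ideal_generator[OF admissible_one[OF adm] inverse_nonunit[OF cg g u]] .
    ultimately have "\<phi> (c g) * (1 * \<phi> u) \<in> extended_ideal H"
      by (rule extended_ideal_mult_left[OF adm])
    then show False
      using admissible_one_notin_ideal[OF adm] u(2) by (simp flip: phi_mult add: phi_one)
  qed
next
  fix w assume "w \<in> W"
  then have "\<phi> w \<in> additive_closure (\<phi> ` (W \<inter> homogeneous grK))"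
    using W_additive_closure additive_closure_image[OF phi.additive_axioms] by blast
  then show "w \<in> {b. \<phi> b \<in> additive_closure H}"
    using additive_closure_mono[OF admissible_image_subset[OF adm]] by blast
qed

end

theorem exists_graded_valuation_ring_over: "\<exists>V. graded_valuation_ring grL V \<and> {b. \<phi> b \<in> V} = W"
proof -
  obtain H where adm: "admissible H" and max: "\<And>H'. admissible H' \<Longrightarrow> H \<subseteq> H' \<Longrightarrow> H' = H"
    using exists_maximal_admissible by blast
  have "graded_valuation_ring grL (additive_closure H)"
    unfolding graded_valuation_ring_def
    using graded_subring_additive_closure[OF adm] maximal_admissible_valuation[OF adm max] by blast
  then show ?thesis using additive_closure_contraction[OF adm] by blast
qed

end

lemma Pset_restriction_surjective:
  assumes "graded_field grK" "graded_field grL" "graded_embedding grK grL \<phi>"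
    and compatible: "\<And>a. \<phi> (\<iota>K a) = \<iota>L a" and W: "W \<in> Pset grK \<iota>K"
  shows "\<exists>V\<in>Pset grL \<iota>L. {b. \<phi> b \<in> V} = W"
proof -
  have "graded_valuation_ring grK W" and \<iota>K: "range \<iota>K \<subseteq> W" using W unfolding Pset_def by auto
  then interpret graded_chevalley grK grL \<phi> W using assms(1-3) by unfold_locales
  obtain V where V: "graded_valuation_ring grL V" "{b. \<phi> b \<in> V} = W"
    using exists_graded_valuation_ring_over by blast
  have "range \<iota>L \<subseteq> V" using \<iota>K V(2) compatible by (auto simp flip: compatible)
  then show ?thesis using V unfolding Pset_def by blast
qed

lemma topspace_Pspace: "topspace (Pspace gr \<iota>) = Pset gr \<iota>"
proof -
  have "Pset gr \<iota> \<in> {{V \<in> Pset gr \<iota>. F \<subseteq> V} | F. finite F \<and> F \<subseteq> homogeneous gr}"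
    by (rule CollectI, rule exI[of _ "{}"]) auto
  then show ?thesis unfolding Pspace_def topology_generated_by_topspace by blast
qed

lemma mem_fibre_prod:
  "(x, V) \<in> fibre_prod grL \<iota>L X \<pi>X \<phi> \<longleftrightarrow>
     x \<in> topspace X \<and> V \<in> Pset grL \<iota>L \<and> \<pi>X x = {a. \<phi> a \<in> V}"
  unfolding fibre_prod_def topspace_Pspace by blast

lemma bir_obj_Pset: "bir_obj grk grK \<iota> X \<pi> \<Longrightarrow> x \<in> topspace X \<Longrightarrow> \<pi> x \<in> Pset grK \<iota>"
  unfolding bir_obj_def local_homeomorphism_def
  using continuous_map_image_subset_topspace topspace_Pspace by fastforce

context
  fixes grk :: "real \<Rightarrow> 'k::comm_ring_1 set"
    and grL :: "real \<Rightarrow> 'b::comm_ring_1 set" and \<iota>L :: "'k \<Rightarrow> 'b" and Y :: "'q topology"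
    and \<pi>Y :: "'q \<Rightarrow> 'b set"
    and grK :: "real \<Rightarrow> 'a::comm_ring_1 set" and \<iota>K :: "'k \<Rightarrow> 'a" and X :: "'p topology"
    and \<pi>X :: "'p \<Rightarrow> 'a set"
    and \<phi> :: "'a \<Rightarrow> 'b" and h :: "'q \<Rightarrow> 'p"
  assumes mor: "bir_mor grk grL \<iota>L Y \<pi>Y grK \<iota>K X \<pi>X \<phi> h"
begin

lemma bir_mor_source: "bir_obj grk grL \<iota>L Y \<pi>Y"
  and bir_mor_target: "bir_obj grk grK \<iota>K X \<pi>X"
  and bir_mor_embedding: "graded_embedding grK grL \<phi>"
  and bir_mor_compatible: "\<phi> (\<iota>K a) = \<iota>L a"
  and bir_mor_continuous: "continuous_map Y X h"
  and bir_mor_restriction: "y \<in> topspace Y \<Longrightarrow> \<pi>X (h y) = {a. \<phi> a \<in> \<pi>Y y}"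
  using mor unfolding bir_mor_def by blast+

lemma bir_mor_fibre_map: "y \<in> topspace Y \<Longrightarrow> (h y, \<pi>Y y) \<in> fibre_prod grL \<iota>L X \<pi>X \<phi>"
  unfolding mem_fibre_prod
  using bir_obj_Pset[OF bir_mor_source] bir_mor_restriction
    continuous_map_image_subset_topspace[OF bir_mor_continuous]
  by blast

lemma bir_mor_proper_iff:
  "mor_proper grL \<iota>L Y \<pi>Y X \<pi>X \<phi> h \<longleftrightarrow> mor_separated grL \<iota>L Y \<pi>Y X \<pi>X \<phi> h \<and>
     fibre_prod grL \<iota>L X \<pi>X \<phi> \<subseteq> (\<lambda>y. (h y, \<pi>Y y)) ` topspace Y"
proof -
  have "(\<lambda>y. (h y, \<pi>Y y)) ` topspace Y \<subseteq> fibre_prod grL \<iota>L X \<pi>X \<phi>"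
    using bir_mor_fibre_map by blast
  then show ?thesis unfolding mor_proper_def mor_separated_def bij_betw_def by blast
qed

lemma bir_mor_lift_Pset:
  assumes "W \<in> Pset grK \<iota>K" shows "\<exists>V\<in>Pset grL \<iota>L. {b. \<phi> b \<in> V} = W"
proof -
  have "graded_field grK" "graded_field grL"
    using bir_mor_source bir_mor_target unfolding bir_obj_def by blast+
  then show ?thesis
    using Pset_restriction_surjective bir_mor_embedding bir_mor_compatible assms by blast
qed

end

locale composable_bir_mors =
  fixes grk :: "real \<Rightarrow> 'k::comm_ring_1 set"
    and grX :: "real \<Rightarrow> 'a::comm_ring_1 set" and \<iota>X :: "'k \<Rightarrow> 'a"
    and TX :: "'p topology" and \<pi>X :: "'p \<Rightarrow> 'a set"
    and grY :: "real \<Rightarrow> 'b::comm_ring_1 set" and \<iota>Y :: "'k \<Rightarrow> 'b"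
    and TY :: "'q topology" and \<pi>Y :: "'q \<Rightarrow> 'b set"
    and grZ :: "real \<Rightarrow> 'c::comm_ring_1 set" and \<iota>Z :: "'k \<Rightarrow> 'c"
    and TZ :: "'r topology" and \<pi>Z :: "'r \<Rightarrow> 'c set"
    and \<phi>f :: "'b \<Rightarrow> 'a" and hf :: "'p \<Rightarrow> 'q"
    and \<phi>g :: "'c \<Rightarrow> 'b" and hg :: "'q \<Rightarrow> 'r"
  assumes f: "bir_mor grk grX \<iota>X TX \<pi>X grY \<iota>Y TY \<pi>Y \<phi>f hf"
    and g: "bir_mor grk grY \<iota>Y TY \<pi>Y grZ \<iota>Z TZ \<pi>Z \<phi>g hg"
begin

lemma mem_fibre_prod_gf:
  assumes "y \<in> topspace TY" "V \<in> Pset grX \<iota>X" "\<pi>Y y = {a. \<phi>f a \<in> V}"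
  shows "(hg y, V) \<in> fibre_prod grX \<iota>X TZ \<pi>Z (\<phi>f \<circ> \<phi>g)"
  using assms bir_mor_fibre_map[OF g] unfolding mem_fibre_prod by auto

context
  assumes gf: "mor_proper grX \<iota>X TX \<pi>X TZ \<pi>Z (\<phi>f \<circ> \<phi>g) (hg \<circ> hf)"
begin

lemma gf_fibre_map_inj: "inj_on (\<lambda>x. (hg (hf x), \<pi>X x)) (topspace TX)"
  using gf unfolding mor_proper_def bij_betw_def by (simp add: comp_def)

lemma gf_fibre_mapE:
  assumes "(z, V) \<in> fibre_prod grX \<iota>X TZ \<pi>Z (\<phi>f \<circ> \<phi>g)"
  obtains x where "x \<in> topspace TX" "hg (hf x) = z" "\<pi>X x = V"
proof -
  have "(z, V) \<in> (\<lambda>x. (hg (hf x), \<pi>X x)) ` topspace TX"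
    using gf assms unfolding mor_proper_def bij_betw_def by (simp add: comp_def)
  then show ?thesis using that by blast
qed

lemma f_proper_if_g_separated:
  assumes sep: "mor_separated grY \<iota>Y TY \<pi>Y TZ \<pi>Z \<phi>g hg"
  shows "mor_proper grX \<iota>X TX \<pi>X TY \<pi>Y \<phi>f hf"
  unfolding bir_mor_proper_iff[OF f]
proof
  show "mor_separated grX \<iota>X TX \<pi>X TY \<pi>Y \<phi>f hf"
    using gf_fibre_map_inj unfolding mor_separated_def inj_on_def by auto
  show "fibre_prod grX \<iota>X TY \<pi>Y \<phi>f \<subseteq> (\<lambda>x. (hf x, \<pi>X x)) ` topspace TX"
  proof (clarify)
    fix y V assume "(y, V) \<in> fibre_prod grX \<iota>X TY \<pi>Y \<phi>f"
    then have y: "y \<in> topspace TY" "V \<in> Pset grX \<iota>X" "\<pi>Y y = {a. \<phi>f a \<in> V}"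
      unfolding mem_fibre_prod by auto
    obtain x where x: "x \<in> topspace TX" "hg (hf x) = hg y" "\<pi>X x = V"
      using gf_fibre_mapE[OF mem_fibre_prod_gf[OF y]] .
    have "hf x \<in> topspace TY" using bir_mor_fibre_map[OF f x(1)] unfolding mem_fibre_prod by blast
    moreover have "\<pi>Y (hf x) = \<pi>Y y" using bir_mor_restriction[OF f x(1)] x(3) y(3) by simp
    ultimately have "hf x = y" using sep y(1) x(2) unfolding mor_separated_def inj_on_def by blast
    then show "(y, V) \<in> (\<lambda>x. (hf x, \<pi>X x)) ` topspace TX" using x by blast
  qed
qed

lemma g_fibre_map_surjective:
  "fibre_prod grY \<iota>Y TZ \<pi>Z \<phi>g \<subseteq> (\<lambda>y. (hg y, \<pi>Y y)) ` topspace TY"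
proof (clarify)
  fix z W assume "(z, W) \<in> fibre_prod grY \<iota>Y TZ \<pi>Z \<phi>g"
  then have z: "z \<in> topspace TZ" "W \<in> Pset grY \<iota>Y" "\<pi>Z z = {a. \<phi>g a \<in> W}"
    unfolding mem_fibre_prod by auto
  obtain V where V: "V \<in> Pset grX \<iota>X" "{b. \<phi>f b \<in> V} = W"
    using bir_mor_lift_Pset[OF f z(2)] by blast
  have "(z, V) \<in> fibre_prod grX \<iota>X TZ \<pi>Z (\<phi>f \<circ> \<phi>g)"
    using z V unfolding mem_fibre_prod by auto
  then obtain x where x: "x \<in> topspace TX" "hg (hf x) = z" "\<pi>X x = V" by (rule gf_fibre_mapE)
  have "hf x \<in> topspace TY" using bir_mor_fibre_map[OF f x(1)] unfolding mem_fibre_prod by blast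
  moreover have "\<pi>Y (hf x) = W" using bir_mor_restriction[OF f x(1)] x(3) V(2) by simp
  ultimately show "(z, W) \<in> (\<lambda>y. (hg y, \<pi>Y y)) ` topspace TY" using x(2) by force
qed

lemma g_separated_if_f_proper:
  assumes fp: "mor_proper grX \<iota>X TX \<pi>X TY \<pi>Y \<phi>f hf"
  shows "mor_separated grY \<iota>Y TY \<pi>Y TZ \<pi>Z \<phi>g hg"
  unfolding mor_separated_def
proof (rule inj_onI)
  fix y1 y2 assume y: "y1 \<in> topspace TY" "y2 \<in> topspace TY" "(hg y1, \<pi>Y y1) = (hg y2, \<pi>Y y2)"
  obtain V where V: "V \<in> Pset grX \<iota>X" "{b. \<phi>f b \<in> V} = \<pi>Y y1"
    using bir_mor_lift_Pset[OF f bir_obj_Pset[OF bir_mor_source[OF g] y(1)]] by blast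
  have "(y1, V) \<in> fibre_prod grX \<iota>X TY \<pi>Y \<phi>f" "(y2, V) \<in> fibre_prod grX \<iota>X TY \<pi>Y \<phi>f"
    using y V unfolding mem_fibre_prod by auto
  then obtain x1 x2 where x: "x1 \<in> topspace TX" "(hf x1, \<pi>X x1) = (y1, V)"
    "x2 \<in> topspace TX" "(hf x2, \<pi>X x2) = (y2, V)"
    using fp unfolding bir_mor_proper_iff[OF f] by blast
  then have "x1 = x2" using gf_fibre_map_inj y(3) unfolding inj_on_def by auto
  then show "y1 = y2" using x by simp
qed

lemma g_proper_iff_separated:
  "mor_proper grY \<iota>Y TY \<pi>Y TZ \<pi>Z \<phi>g hg \<longleftrightarrow> mor_separated grY \<iota>Y TY \<pi>Y TZ \<pi>Z \<phi>g hg"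
  using bir_mor_proper_iff[OF g] g_fibre_map_surjective by blast

end

end

theorem lemma2p1:
  fixes grk :: "real \<Rightarrow> 'k::comm_ring_1 set"
    and grX :: "real \<Rightarrow> 'a::comm_ring_1 set" and \<iota>X :: "'k \<Rightarrow> 'a"
    and TX :: "'p topology" and \<pi>X :: "'p \<Rightarrow> 'a set"
    and grY :: "real \<Rightarrow> 'b::comm_ring_1 set" and \<iota>Y :: "'k \<Rightarrow> 'b"
    and TY :: "'q topology" and \<pi>Y :: "'q \<Rightarrow> 'b set"
    and grZ :: "real \<Rightarrow> 'c::comm_ring_1 set" and \<iota>Z :: "'k \<Rightarrow> 'c"
    and TZ :: "'r topology" and \<pi>Z :: "'r \<Rightarrow> 'c set"
    and \<phi>f :: "'b \<Rightarrow> 'a" and hf :: "'p \<Rightarrow> 'q"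
    and \<phi>g :: "'c \<Rightarrow> 'b" and hg :: "'q \<Rightarrow> 'r"
  assumes "graded_field grk"
    and f: "bir_mor grk grX \<iota>X TX \<pi>X grY \<iota>Y TY \<pi>Y \<phi>f hf"
    and g: "bir_mor grk grY \<iota>Y TY \<pi>Y grZ \<iota>Z TZ \<pi>Z \<phi>g hg"
    and gf: "mor_proper grX \<iota>X TX \<pi>X TZ \<pi>Z (\<phi>f \<circ> \<phi>g) (hg \<circ> hf)"
    and "mor_separated grY \<iota>Y TY \<pi>Y TZ \<pi>Z \<phi>g hg \<or> mor_proper grX \<iota>X TX \<pi>X TY \<pi>Y \<phi>f hf"
  shows "mor_proper grX \<iota>X TX \<pi>X TY \<pi>Y \<phi>f hf \<and> mor_proper grY \<iota>Y TY \<pi>Y TZ \<pi>Z \<phi>g hg"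
proof -
  interpret composable_bir_mors grk grX \<iota>X TX \<pi>X grY \<iota>Y TY \<pi>Y grZ \<iota>Z TZ \<pi>Z \<phi>f hf \<phi>g hg
    using f g by unfold_locales
  from assms(5) show ?thesis
  proof
    assume "mor_separated grY \<iota>Y TY \<pi>Y TZ \<pi>Z \<phi>g hg"
    then show ?thesis using f_proper_if_g_separated[OF gf] g_proper_iff_separated[OF gf] by blast
  next
    assume "mor_proper grX \<iota>X TX \<pi>X TY \<pi>Y \<phi>f hf"
    then show ?thesis using g_separated_if_f_proper[OF gf] g_proper_iff_separated[OF gf] by blast
  qed
qed

end
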